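(* Let $n\geq 1$ be an integer and let $a,b,x\in\mathbb{C}$ with $b\neq 0$. Then $$\sum_{k=0}^{n-1}\binom{n-1}{k}C_{k+1}^{(a,b)}x^{k}(x-a)^{n-1-k}(x-b)^{n-1-k}=\sum_{k=0}^{n-1}\frac{1}{n}\binom{n}{k}\binom{n}{k+1}x^{2k}a^{n-k}b^{n-1-k}=\frac{1}{b}\sum_{k=0}^{n}\binom{n+k}{2k}C_k x^{2k}(ab-x^2)^{n-k},$$ where $C_k$ is the $k$-th Catalan number and $C_m^{(a,b)}$ is the valley type $(a,b)$-Catalan number defined in the context.
   Context: $C_k=\frac{1}{k+1}\binom{2k}{k}$ are the Catalan numbers. For $m\geq 1$ and $a,b\in\mathbb{C}$, the valley type $(a,b)$-Catalan number is $C_m^{(a,b)}=\sum_{k=0}^{m-1}\frac{1}{m}\binom{m}{k}\binom{m}{k+1}a^{m-k}b^k$. *)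

theory Defs
  imports Complex_Main
begin

definition catalan :: "nat \<Rightarrow> complex" where
  "catalan k = (1 / of_nat (k + 1)) * of_nat ((2 * k) choose k)"

text \<open>Valley type (a,b)-Catalan number, for m >= 1.\<close>
definition valley_catalan :: "complex \<Rightarrow> complex \<Rightarrow> nat \<Rightarrow> complex" where
  "valley_catalan a b m =
     (\<Sum>k = 0..m - 1. (1 / of_nat m) * of_nat (m choose k) * of_nat (m choose (k + 1))
                        * a ^ (m - k) * b ^ k)"

end

theory Submission
  imports Defs
begin

(*
  Everything is expressed through the Narayana polynomial
    N_m(y,s) = sum_j N(m,j+1) y^j s^(m-1-j).
  Touchard's identity  N_(r+1)(y,s) = sum_i C_i binom(r,2i) (ys)^i (y+s)^(r-2i)
  writes C^(a,b)_(k+1) = a N_(k+1)(b,a) in terms of ab and a+b. Summing against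
  binom(n-1,k) x^k ((x-a)(x-b))^(n-1-k), the identity (a+b)x + (x-a)(x-b) = x^2 + ab and
  Touchard's identity read backwards turn the left side into a N_n(x^2,ab), which is the
  middle sum. For the right side, write s = y + (s-y) in s N_n(y,s) and collect the
  coefficients of y^k (s-y)^(n-k); a Vandermonde convolution identifies them as
  binom(n+k,2k) C_k.
*)

lemma sum_atMost_triangle_swap:
  fixes g :: "nat \<Rightarrow> nat \<Rightarrow> 'a::comm_monoid_add"
  shows "(\<Sum>i\<le>n. \<Sum>k\<in>{i..n}. g i k) = (\<Sum>k\<le>n. \<Sum>i\<le>k. g i k)"
proof -
  have "(\<Sum>i\<le>n. \<Sum>k\<in>{i..n}. g i k) = (\<Sum>i\<le>n. \<Sum>k\<in>{k\<in>{..n}. i \<le> k}. g i k)"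
    by (intro sum.cong) auto
  also have "\<dots> = (\<Sum>k\<le>n. \<Sum>i\<in>{i\<in>{..n}. i \<le> k}. g i k)"
    by (rule sum.swap_restrict) auto
  also have "\<dots> = (\<Sum>k\<le>n. \<Sum>i\<le>k. g i k)"
    by (intro sum.cong) auto
  finally show ?thesis .
qed

lemma power_mult_binomial_expand:
  fixes y w :: "'a::comm_semiring_1"
  assumes "i + m \<le> n"
  shows "y ^ i * w ^ (n - i - m) * (y + w) ^ m
           = (\<Sum>k\<in>{i..n}. of_nat (m choose (k - i)) * y ^ k * w ^ (n - k))"
proof -
  have "y ^ i * w ^ (n - i - m) * (y + w) ^ m
          = (\<Sum>l\<in>{0..m}. of_nat (m choose l) * y ^ (l + i) * w ^ (n - (l + i)))"
  proof -
    have "y ^ i * w ^ (n - i - m) * (of_nat (m choose l) * y ^ l * w ^ (m - l))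
            = of_nat (m choose l) * y ^ (l + i) * w ^ (n - (l + i))" if "l \<le> m" for l
    proof -
      have "n - (l + i) = (n - i - m) + (m - l)" using that assms by simp
      then show ?thesis by (simp add: power_add mult_ac)
    qed
    then show ?thesis
      by (simp add: binomial_ring sum_distrib_left atLeast0AtMost)
  qed
  also have "\<dots> = (\<Sum>k\<in>{i..i + m}. of_nat (m choose (k - i)) * y ^ k * w ^ (n - k))"
    using sum.shift_bounds_cl_nat_ivl[of "\<lambda>k. of_nat (m choose (k - i)) * y ^ k * w ^ (n - k)" 0 i m]
    by (simp add: add.commute)
  also have "\<dots> = (\<Sum>k\<in>{i..n}. of_nat (m choose (k - i)) * y ^ k * w ^ (n - k))"
    using assms by (intro sum.mono_neutral_left) (auto simp: binomial_eq_0)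
  finally show ?thesis .
qed

lemma sum_power_mult_binomial_collect:
  fixes f :: "nat \<Rightarrow> 'a::comm_semiring_1"
  shows "(\<Sum>j\<le>n. f j * y ^ j * (y + w) ^ (n - j))
           = (\<Sum>k\<le>n. (\<Sum>j\<le>k. f j * of_nat ((n - j) choose (k - j))) * y ^ k * w ^ (n - k))"
proof -
  have "(\<Sum>j\<le>n. f j * y ^ j * (y + w) ^ (n - j))
          = (\<Sum>j\<le>n. \<Sum>k\<in>{j..n}. f j * of_nat ((n - j) choose (k - j)) * y ^ k * w ^ (n - k))"
  proof (intro sum.cong refl)
    fix j assume "j \<in> {..n}"
    then have "y ^ j * (y + w) ^ (n - j)
                 = (\<Sum>k\<in>{j..n}. of_nat ((n - j) choose (k - j)) * y ^ k * w ^ (n - k))"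
      using power_mult_binomial_expand[of j "n - j" n y w] by simp
    then show "f j * y ^ j * (y + w) ^ (n - j)
                 = (\<Sum>k\<in>{j..n}. f j * of_nat ((n - j) choose (k - j)) * y ^ k * w ^ (n - k))"
      by (simp add: sum_distrib_left mult.assoc)
  qed
  also have "\<dots> = (\<Sum>k\<le>n. (\<Sum>j\<le>k. f j * of_nat ((n - j) choose (k - j))) * y ^ k * w ^ (n - k))"
    by (simp add: sum_atMost_triangle_swap sum_distrib_right)
  finally show ?thesis .
qed

lemma sum_power_prod_binomial_collect:
  fixes c :: "nat \<Rightarrow> 'a::comm_semiring_1"
  assumes "\<And>i. r < 2 * i \<Longrightarrow> c i = 0"
  shows "(\<Sum>i\<le>r. c i * (y * s) ^ i * (y + s) ^ (r - 2 * i))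
           = (\<Sum>k\<le>r. (\<Sum>i\<le>k. c i * of_nat ((r - 2 * i) choose (k - i))) * y ^ k * s ^ (r - k))"
proof -
  have "c i * (y * s) ^ i * (y + s) ^ (r - 2 * i)
          = (\<Sum>k\<in>{i..r}. c i * of_nat ((r - 2 * i) choose (k - i)) * y ^ k * s ^ (r - k))" for i
  proof (cases "2 * i \<le> r")
    case True
    then have "s ^ i = s ^ (r - i - (r - 2 * i))" by simp
    then show ?thesis
      using power_mult_binomial_expand[of i "r - 2 * i" r y s] True
      by (simp add: power_mult_distrib sum_distrib_left mult.assoc)
  qed (simp add: assms)
  then have "(\<Sum>i\<le>r. c i * (y * s) ^ i * (y + s) ^ (r - 2 * i))
          = (\<Sum>i\<le>r. \<Sum>k\<in>{i..r}. c i * of_nat ((r - 2 * i) choose (k - i)) * y ^ k * s ^ (r - k))"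
    by simp
  also have "\<dots> = (\<Sum>k\<le>r. (\<Sum>i\<le>k. c i * of_nat ((r - 2 * i) choose (k - i))) * y ^ k * s ^ (r - k))"
    by (simp add: sum_atMost_triangle_swap sum_distrib_right)
  finally show ?thesis .
qed

lemma sum_choose_mult_choose_Suc:
  "(\<Sum>i\<le>j. (j choose i) * (m choose Suc i)) = (j + m) choose Suc j"
proof -
  have "(j + m) choose Suc j = (\<Sum>k\<le>j. (j choose k) * (m choose (Suc j - k)))"
    by (simp add: vandermonde[of j m "Suc j", symmetric])
  also have "\<dots> = (\<Sum>i\<le>j. (j choose (j - i)) * (m choose Suc i))"
    by (rule sum.reindex_bij_witness[where i="\<lambda>k. j - k" and j="\<lambda>k. j - k"])
       (auto simp: Suc_diff_le)
  also have "\<dots> = (\<Sum>i\<le>j. (j choose i) * (m choose Suc i))"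
    by (intro sum.cong) (auto simp: binomial_symmetric[symmetric])
  finally show ?thesis ..
qed

text \<open>Both sides count the same multinomial coefficient r! / (i! i! (j-i)! (r-j-i)!).\<close>
lemma choose_mult_choose_mult_choose:
  assumes "i \<le> j" "j \<le> r"
  shows "(r choose (2 * i)) * ((2 * i) choose i) * ((r - 2 * i) choose (j - i))
           = (r choose j) * (j choose i) * ((r - j) choose i)"
proof (cases "i \<le> r - j")
  case True
  have "(r choose (2 * i)) * ((2 * i) choose i) = (r choose i) * ((r - i) choose i)"
    using choose_mult[of i "2 * i" r] True assms by auto
  moreover have "((r - i) choose i) * ((r - 2 * i) choose (j - i))
                   = ((r - i) choose (j - i)) * ((r - j) choose i)"
  proof -
    have "((r - i) choose j) * (j choose i) = ((r - i) choose i) * ((r - 2 * i) choose (j - i))"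
      using choose_mult[of i j "r - i"] True assms by (auto simp: diff_diff_left mult_2)
    moreover have "((r - i) choose j) * (j choose (j - i)) = ((r - i) choose (j - i)) * ((r - j) choose i)"
      using choose_mult[of "j - i" j "r - i"] True assms by auto
    ultimately show ?thesis
      using assms by (simp add: binomial_symmetric[symmetric])
  qed
  moreover have "(r choose j) * (j choose i) = (r choose i) * ((r - i) choose (j - i))"
    using choose_mult[of i j r] assms by auto
  ultimately show ?thesis
    by (metis mult.assoc)
next
  case False
  then have "2 * i \<le> r \<Longrightarrow> (r - 2 * i) choose (j - i) = 0"
    by (simp add: binomial_eq_0)
  then show ?thesis
    using False by (cases "2 * i \<le> r") (simp_all add: binomial_eq_0)
qed

text \<open>\<open>narayana m j\<close> is the Narayana number N(m, j+1).\<close>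
definition narayana :: "nat \<Rightarrow> nat \<Rightarrow> complex" where
  "narayana m j = 1 / of_nat m * of_nat (m choose j) * of_nat (m choose (j + 1))"

definition narayana_poly :: "nat \<Rightarrow> complex \<Rightarrow> complex \<Rightarrow> complex" where
  "narayana_poly m y s = (\<Sum>j<m. narayana m j * y ^ j * s ^ (m - 1 - j))"

lemma narayana_self [simp]: "narayana n n = 0"
  by (simp add: narayana_def)

lemma catalan_choose_sum_eq_narayana:
  assumes "j \<le> r"
  shows "(\<Sum>i\<le>j. catalan i * of_nat (r choose (2 * i)) * of_nat ((r - 2 * i) choose (j - i)))
           = narayana (Suc r) j"
proof -
  have "catalan i * of_nat (r choose (2 * i)) * of_nat ((r - 2 * i) choose (j - i))
          = of_nat (r choose j) / of_nat (Suc (r - j))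
              * of_nat ((j choose i) * (Suc (r - j) choose Suc i))" if "i \<le> j" for i
  proof -
    have ratio: "of_nat ((r - j) choose i) / of_nat (Suc i)
                   = (of_nat (Suc (r - j) choose Suc i) / of_nat (Suc (r - j)) :: complex)"
      by (simp add: field_simps del: of_nat_Suc binomial_Suc_Suc)
         (metis Suc_times_binomial of_nat_mult)
    have "catalan i * of_nat (r choose (2 * i)) * of_nat ((r - 2 * i) choose (j - i))
            = of_nat ((r choose (2 * i)) * ((2 * i) choose i) * ((r - 2 * i) choose (j - i)))
                / of_nat (Suc i)"
      by (simp add: catalan_def)
    also have "\<dots> = of_nat (r choose j) * of_nat (j choose i)
                       * (of_nat ((r - j) choose i) / of_nat (Suc i))"
      by (simp add: choose_mult_choose_mult_choose[OF that assms])
    also have "\<dots> = of_nat (r choose j) * of_nat (j choose i)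
                       * (of_nat (Suc (r - j) choose Suc i) / of_nat (Suc (r - j)))"
      by (simp only: ratio)
    finally show ?thesis
      by simp
  qed
  then have "(\<Sum>i\<le>j. catalan i * of_nat (r choose (2 * i)) * of_nat ((r - 2 * i) choose (j - i)))
               = of_nat (r choose j) / of_nat (Suc (r - j))
                   * of_nat (\<Sum>i\<le>j. (j choose i) * (Suc (r - j) choose Suc i))"
    by (simp add: sum_distrib_left)
  also have "\<dots> = of_nat (r choose j) / of_nat (Suc r - j) * of_nat (Suc r choose Suc j)"
  proof -
    have "(\<Sum>i\<le>j. (j choose i) * (Suc (r - j) choose Suc i)) = Suc r choose Suc j"
      using sum_choose_mult_choose_Suc[of j "Suc (r - j)"] assms by simp
    then show ?thesis
      using assms by (simp add: Suc_diff_le)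
  qed
  also have "\<dots> = narayana (Suc r) j"
  proof -
    have "(Suc r - j) * (Suc r choose j) = Suc r * (r choose j)"
      using binomial_absorb_comp[of "Suc r" j] by simp
    then have "(of_nat (Suc r - j) * of_nat (Suc r choose j) :: complex)
                 = of_nat (Suc r) * of_nat (r choose j)"
      by (metis of_nat_mult)
    then have "of_nat (r choose j) / of_nat (Suc r - j) = (of_nat (Suc r choose j) / of_nat (Suc r) :: complex)"
      using assms by (subst frac_eq_eq) (auto simp del: of_nat_Suc binomial_Suc_Suc simp add: ac_simps)
    then show ?thesis
      by (simp add: narayana_def)
  qed
  finally show ?thesis .
qed

lemma narayana_poly_Suc:
  "narayana_poly (Suc r) y s = (\<Sum>j\<le>r. narayana (Suc r) j * y ^ j * s ^ (r - j))"
  by (simp add: narayana_poly_def lessThan_Suc_atMost)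

theorem narayana_poly_touchard:
  "narayana_poly (Suc r) y s
     = (\<Sum>i\<le>r. catalan i * of_nat (r choose (2 * i)) * (y * s) ^ i * (y + s) ^ (r - 2 * i))"
proof -
  have "(\<Sum>i\<le>r. catalan i * of_nat (r choose (2 * i)) * (y * s) ^ i * (y + s) ^ (r - 2 * i))
          = (\<Sum>k\<le>r. (\<Sum>i\<le>k. catalan i * of_nat (r choose (2 * i)) * of_nat ((r - 2 * i) choose (k - i)))
                      * y ^ k * s ^ (r - k))"
    by (rule sum_power_prod_binomial_collect) simp
  also have "\<dots> = narayana_poly (Suc r) y s"
    by (simp add: narayana_poly_Suc catalan_choose_sum_eq_narayana)
  finally show ?thesis ..
qed

lemma narayana_choose_sum_eq_catalan:
  assumes "0 < n" "k \<le> n"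
  shows "(\<Sum>j\<le>k. narayana n j * of_nat ((n - j) choose (k - j))) = of_nat ((n + k) choose (2 * k)) * catalan k"
proof -
  have "(\<Sum>j\<le>k. narayana n j * of_nat ((n - j) choose (k - j)))
          = 1 / of_nat n * of_nat (n choose k) * of_nat (\<Sum>j\<le>k. (k choose j) * (n choose Suc j))"
  proof -
    have "narayana n j * of_nat ((n - j) choose (k - j))
            = 1 / of_nat n * of_nat (n choose k) * of_nat ((k choose j) * (n choose Suc j))"
      if "j \<le> k" for j
    proof -
      have "(n choose k) * (k choose j) = (n choose j) * ((n - j) choose (k - j))"
        using choose_mult[of j k n] that assms by simp
      then show ?thesis
        unfolding narayana_def by (simp add: mult_ac flip: of_nat_mult)
    qed
    then show ?thesis
      by (simp add: sum_distrib_left)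
  qed
  also have "\<dots> = 1 / of_nat n * of_nat ((n choose k) * ((n + k) choose Suc k))"
    by (simp only: sum_choose_mult_choose_Suc add.commute[of k n] of_nat_mult mult.assoc)
  also have "\<dots> = of_nat ((n + k) choose (2 * k)) * catalan k"
  proof -
    have "Suc k * ((n + k) choose Suc k) = (n + k) * ((n + k - 1) choose k)"
      by (rule binomial_absorption)
    also have "\<dots> = n * ((n + k) choose k)"
      using binomial_absorb_comp[of "n + k" k] by simp
    finally have absorb: "(of_nat (Suc k) * of_nat ((n + k) choose Suc k) :: complex)
                            = of_nat n * of_nat ((n + k) choose k)"
      by (metis of_nat_mult)
    have "((n + k) choose (2 * k)) * ((2 * k) choose k) = ((n + k) choose k) * (n choose k)"
      using choose_mult[of k "2 * k" "n + k"] assms by (simp add: mult_2)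
    then have central: "(of_nat ((n + k) choose (2 * k)) * of_nat ((2 * k) choose k) :: complex)
                          = of_nat ((n + k) choose k) * of_nat (n choose k)"
      by (metis of_nat_mult)
    show ?thesis
      using \<open>0 < n\<close> absorb central
      by (simp add: catalan_def field_simps del: of_nat_Suc binomial_Suc_Suc)
  qed
  finally show ?thesis .
qed

lemma mult_narayana_poly:
  assumes "0 < n"
  shows "s * narayana_poly n y s = (\<Sum>j\<le>n. narayana n j * y ^ j * s ^ (n - j))"
proof -
  obtain r where n: "n = Suc r"
    using assms gr0_implies_Suc by blast
  have "s * narayana_poly n y s = (\<Sum>j\<le>r. narayana n j * y ^ j * s ^ (n - j))"
    unfolding n narayana_poly_Suc sum_distrib_left
    by (intro sum.cong) (auto simp: Suc_diff_le mult_ac)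
  then show ?thesis
    by (simp add: n)
qed

theorem narayana_poly_expand_diff:
  assumes "0 < n"
  shows "s * narayana_poly n y s
           = (\<Sum>k\<le>n. of_nat ((n + k) choose (2 * k)) * catalan k * y ^ k * (s - y) ^ (n - k))"
proof -
  have "s * narayana_poly n y s = (\<Sum>j\<le>n. narayana n j * y ^ j * (y + (s - y)) ^ (n - j))"
    using mult_narayana_poly[OF assms] by simp
  also have "\<dots> = (\<Sum>k\<le>n. (\<Sum>j\<le>k. narayana n j * of_nat ((n - j) choose (k - j))) * y ^ k * (s - y) ^ (n - k))"
    by (rule sum_power_mult_binomial_collect)
  also have "\<dots> = (\<Sum>k\<le>n. of_nat ((n + k) choose (2 * k)) * catalan k * y ^ k * (s - y) ^ (n - k))"
    using assms by (intro sum.cong) (simp_all add: narayana_choose_sum_eq_catalan)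
  finally show ?thesis .
qed

lemma sum_lessThan_factor_power:
  fixes c :: "nat \<Rightarrow> 'a::comm_semiring_1"
  shows "(\<Sum>k<m. c k * y ^ k * s ^ (m - k) * u ^ (m - 1 - k))
           = s * (\<Sum>k<m. c k * y ^ k * (s * u) ^ (m - 1 - k))"
  unfolding sum_distrib_left
proof (intro sum.cong refl)
  fix k assume "k \<in> {..<m}"
  then have "s ^ (m - k) = s * s ^ (m - 1 - k)"
    by (simp add: Suc_diff_Suc power_Suc[symmetric])
  then show "c k * y ^ k * s ^ (m - k) * u ^ (m - 1 - k) = s * (c k * y ^ k * (s * u) ^ (m - 1 - k))"
    by (simp add: power_mult_distrib mult_ac)
qed

lemma valley_catalan_eq_narayana_poly:
  assumes "0 < m"
  shows "valley_catalan a b m = a * narayana_poly m b a"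
proof -
  have "{0..m - 1} = {..<m}"
    using assms by auto
  then show ?thesis
    using sum_lessThan_factor_power[of "narayana m" b a m 1]
    by (simp add: valley_catalan_def narayana_poly_def narayana_def mult_ac)
qed

lemma sum_choose_mult_choose_power:
  fixes p x t :: "'a::comm_semiring_1"
  shows "(\<Sum>k\<le>r. of_nat (r choose k) * of_nat (k choose q) * p ^ (k - q) * x ^ k * t ^ (r - k))
           = of_nat (r choose q) * x ^ q * (p * x + t) ^ (r - q)"
proof (cases "q \<le> r")
  case False
  then show ?thesis
    by (simp add: binomial_eq_0)
next
  case True
  have "(\<Sum>k\<le>r. of_nat (r choose k) * of_nat (k choose q) * p ^ (k - q) * x ^ k * t ^ (r - k))
          = (\<Sum>k\<in>{q..r}. of_nat (r choose k) * of_nat (k choose q) * p ^ (k - q) * x ^ k * t ^ (r - k))"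
    by (rule sum.mono_neutral_right) (auto simp: binomial_eq_0)
  also have "\<dots> = (\<Sum>l\<in>{0..r - q}. of_nat (r choose (l + q)) * of_nat ((l + q) choose q)
                                     * p ^ l * x ^ (l + q) * t ^ (r - (l + q)))"
    by (rule sum.reindex_bij_witness[where i="\<lambda>l. l + q" and j="\<lambda>k. k - q"]) (use True in auto)
  also have "\<dots> = (\<Sum>l\<le>r - q. of_nat (r choose q) * x ^ q * (of_nat ((r - q) choose l) * (p * x) ^ l * t ^ (r - q - l)))"
  proof (intro sum.cong)
    fix l assume "l \<in> {..r - q}"
    then have "(r choose (l + q)) * ((l + q) choose q) = (r choose q) * ((r - q) choose l)"
      using choose_mult[of q "l + q" r] True by auto
    then have "(of_nat (r choose (l + q)) * of_nat ((l + q) choose q) :: 'a)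
                 = of_nat (r choose q) * of_nat ((r - q) choose l)"
      by (metis of_nat_mult)
    moreover have "r - (l + q) = r - q - l"
      by simp
    ultimately show "of_nat (r choose (l + q)) * of_nat ((l + q) choose q) * p ^ l * x ^ (l + q) * t ^ (r - (l + q))
                       = of_nat (r choose q) * x ^ q * (of_nat ((r - q) choose l) * (p * x) ^ l * t ^ (r - q - l))"
      by (simp add: power_add power_mult_distrib mult_ac)
  qed (simp add: atLeast0AtMost)
  also have "\<dots> = of_nat (r choose q) * x ^ q * (p * x + t) ^ (r - q)"
    by (simp add: binomial_ring sum_distrib_left)
  finally show ?thesis .
qed

lemma valley_catalan_touchard:
  assumes "k \<le> r"
  shows "valley_catalan a b (Suc k)
           = a * (\<Sum>i\<le>r. catalan i * of_nat (k choose (2 * i)) * (a * b) ^ i * (a + b) ^ (k - 2 * i))"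
proof -
  have "valley_catalan a b (Suc k)
          = a * (\<Sum>i\<le>k. catalan i * of_nat (k choose (2 * i)) * (a * b) ^ i * (a + b) ^ (k - 2 * i))"
    by (simp add: valley_catalan_eq_narayana_poly narayana_poly_touchard mult.commute add.commute)
  also have "\<dots> = a * (\<Sum>i\<le>r. catalan i * of_nat (k choose (2 * i)) * (a * b) ^ i * (a + b) ^ (k - 2 * i))"
    using assms by (intro arg_cong[where f="(*) a"] sum.mono_neutral_left) (auto simp: binomial_eq_0)
  finally show ?thesis .
qed

theorem binomial_sum_valley_catalan:
  "(\<Sum>k\<le>r. of_nat (r choose k) * valley_catalan a b (Suc k) * x ^ k * ((x - a) * (x - b)) ^ (r - k))
     = a * narayana_poly (Suc r) (x\<^sup>2) (a * b)"
proof -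
  define t where "t = (x - a) * (x - b)"
  have "(\<Sum>k\<le>r. of_nat (r choose k) * valley_catalan a b (Suc k) * x ^ k * t ^ (r - k))
          = (\<Sum>k\<le>r. \<Sum>i\<le>r. a * catalan i * (a * b) ^ i
               * (of_nat (r choose k) * of_nat (k choose (2 * i)) * (a + b) ^ (k - 2 * i) * x ^ k * t ^ (r - k)))"
    by (intro sum.cong) (simp_all add: valley_catalan_touchard sum_distrib_left sum_distrib_right mult_ac)
  also have "\<dots> = (\<Sum>i\<le>r. a * catalan i * (a * b) ^ i * (of_nat (r choose (2 * i)) * x ^ (2 * i) * (x\<^sup>2 + a * b) ^ (r - 2 * i)))"
  proof -
    have "(a + b) * x + t = x\<^sup>2 + a * b"
      by (simp add: t_def algebra_simps power2_eq_square)
    then show ?thesis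
      by (subst sum.swap) (simp add: sum_choose_mult_choose_power sum_distrib_left[symmetric])
  qed
  also have "\<dots> = a * narayana_poly (Suc r) (x\<^sup>2) (a * b)"
    by (simp add: narayana_poly_touchard sum_distrib_left power_mult_distrib mult_ac
                  flip: power_mult)
  finally show ?thesis
    by (simp add: t_def)
qed

theorem proposition3p1:
  fixes n :: nat and a b x :: complex
  assumes "n \<ge> 1" and "b \<noteq> 0"
  shows "(\<Sum>k = 0..n - 1. of_nat ((n - 1) choose k) * valley_catalan a b (k + 1)
            * x ^ k * (x - a) ^ (n - 1 - k) * (x - b) ^ (n - 1 - k))
         = (\<Sum>k = 0..n - 1. (1 / of_nat n) * of_nat (n choose k) * of_nat (n choose (k + 1))
            * x ^ (2 * k) * a ^ (n - k) * b ^ (n - 1 - k))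
       \<and> (\<Sum>k = 0..n - 1. (1 / of_nat n) * of_nat (n choose k) * of_nat (n choose (k + 1))
            * x ^ (2 * k) * a ^ (n - k) * b ^ (n - 1 - k))
         = (1 / b) * (\<Sum>k = 0..n. of_nat ((n + k) choose (2 * k)) * catalan k
            * x ^ (2 * k) * (a * b - x ^ 2) ^ (n - k))"
proof -
  obtain r where n: "n = Suc r"
    using assms(1) by (cases n) auto
  have "(\<Sum>k = 0..n - 1. of_nat ((n - 1) choose k) * valley_catalan a b (k + 1)
            * x ^ k * (x - a) ^ (n - 1 - k) * (x - b) ^ (n - 1 - k))
          = a * narayana_poly n (x\<^sup>2) (a * b)"
    using binomial_sum_valley_catalan[of r a b x]
    by (simp add: n atLeast0AtMost power_mult_distrib mult.assoc)
  moreover have "(\<Sum>k = 0..n - 1. (1 / of_nat n) * of_nat (n choose k) * of_nat (n choose (k + 1))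
            * x ^ (2 * k) * a ^ (n - k) * b ^ (n - 1 - k))
          = a * narayana_poly n (x\<^sup>2) (a * b)"
    using sum_lessThan_factor_power[of "narayana n" "x\<^sup>2" a n b]
    by (simp add: n atLeast0AtMost lessThan_Suc_atMost narayana_poly_def narayana_def power_mult)
  moreover have "(1 / b) * (\<Sum>k = 0..n. of_nat ((n + k) choose (2 * k)) * catalan k
            * x ^ (2 * k) * (a * b - x ^ 2) ^ (n - k))
          = a * narayana_poly n (x\<^sup>2) (a * b)"
  proof -
    have "(\<Sum>k = 0..n. of_nat ((n + k) choose (2 * k)) * catalan k
            * x ^ (2 * k) * (a * b - x ^ 2) ^ (n - k)) = b * (a * narayana_poly n (x\<^sup>2) (a * b))"
      using narayana_poly_expand_diff[of n "a * b" "x\<^sup>2"] assms(1)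
      by (simp add: atLeast0AtMost mult_ac flip: power_mult)
    then show ?thesis
      using assms(2) by simp
  qed
  ultimately show ?thesis
    by simp
qed

end
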